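(* For every ordinal $\alpha\geq2$, the varieties $TA_\alpha$ and $SA_\alpha$ have the superamalgamation property: for all $\mathfrak A_0,\mathfrak A_1,\mathfrak A_2$ in the variety and monomorphisms $i_1:\mathfrak A_0\to\mathfrak A_1$, $i_2:\mathfrak A_0\to\mathfrak A_2$ there are $\mathfrak D$ in the variety and monomorphisms $m_1:\mathfrak A_1\to\mathfrak D$, $m_2:\mathfrak A_2\to\mathfrak D$ with $m_1\circ i_1=m_2\circ i_2$ such that, for $\{j,k\}=\{1,2\}$, $x\in A_j$, $y\in A_k$ with $m_j(x)\leq m_k(y)$, there is $z\in A_0$ with $x\leq i_j(z)$ and $i_k(z)\leq y$.
   Context: $TA_\alpha=\mathbf{Mod}(\Sigma_\alpha)$: Boolean algebras with operators $s_{ij}$ ($i\neq j<\alpha$) that are Boolean endomorphisms satisfying $t_1(x)=t_2(x)$ for all finite words $t_1,t_2$ in the $s_{ij}$ whose associated compositions of transpositions $[i,j]$ coincide. $SA_\alpha=\mathbf{Mod}(\Sigma'_\alpha)$: Boolean algebras with Boolean-endomorphism operators $s^i_j,s_{ij}$ ($i\neq j<\alpha$) satisfying $t_1(x)=t_2(x)$ whenever the associated maps $\alpha\to\alpha$ coincide, where $s_{ij}t\mapsto[i,j]\circ\hat t$, $s^i_jt\mapsto[i/j]\circ\hat t$, the empty word $\mapsto Id_\alpha$, and $[i/j]$ sends $i$ to $j$ and fixes the rest. *)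

theory Defs
  imports Main
begin

text \<open>Operator labels: Swap i j stands for s_ij, Subst i j stands for s^i_j.\<close>
datatype 'i opl = Swap 'i 'i | Subst 'i 'i

record 'a bool_alg =
  carrier :: "'a set"
  join :: "'a \<Rightarrow> 'a \<Rightarrow> 'a"
  meet :: "'a \<Rightarrow> 'a \<Rightarrow> 'a"
  compl :: "'a \<Rightarrow> 'a"
  zero :: 'a
  one :: 'a

record ('a, 'i) sba = "'a bool_alg" +
  ops :: "'i opl \<Rightarrow> 'a \<Rightarrow> 'a"

definition is_BA :: "('a, 'b) bool_alg_scheme \<Rightarrow> bool" where
  "is_BA A \<longleftrightarrow>
     zero A \<in> carrier A \<and> one A \<in> carrier A \<and>
     (\<forall>x\<in>carrier A. \<forall>y\<in>carrier A. join A x y \<in> carrier A \<and> meet A x y \<in> carrier A) \<and>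
     (\<forall>x\<in>carrier A. compl A x \<in> carrier A) \<and>
     (\<forall>x\<in>carrier A. \<forall>y\<in>carrier A. join A x y = join A y x \<and> meet A x y = meet A y x) \<and>
     (\<forall>x\<in>carrier A. \<forall>y\<in>carrier A. \<forall>z\<in>carrier A.
        join A x (join A y z) = join A (join A x y) z \<and>
        meet A x (meet A y z) = meet A (meet A x y) z \<and>
        meet A x (join A y z) = join A (meet A x y) (meet A x z) \<and>
        join A x (meet A y z) = meet A (join A x y) (join A x z)) \<and>
     (\<forall>x\<in>carrier A. \<forall>y\<in>carrier A. join A x (meet A x y) = x \<and> meet A x (join A x y) = x) \<and>
     (\<forall>x\<in>carrier A. join A x (zero A) = x \<and> meet A x (one A) = x) \<and>
     (\<forall>x\<in>carrier A. join A x (compl A x) = one A \<and> meet A x (compl A x) = zero A)"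

definition ba_le :: "('a, 'b) bool_alg_scheme \<Rightarrow> 'a \<Rightarrow> 'a \<Rightarrow> bool" where
  "ba_le A x y \<longleftrightarrow> meet A x y = x"

definition transp_idx :: "'i \<Rightarrow> 'i \<Rightarrow> 'i \<Rightarrow> 'i" where
  "transp_idx i j k = (if k = i then j else if k = j then i else k)"

definition repl_idx :: "'i \<Rightarrow> 'i \<Rightarrow> 'i \<Rightarrow> 'i" where
  "repl_idx i j k = (if k = i then j else k)"

fun word_map :: "'i opl list \<Rightarrow> 'i \<Rightarrow> 'i" where
  "word_map [] = id"
| "word_map (Swap i j # t) = transp_idx i j \<circ> word_map t"
| "word_map (Subst i j # t) = repl_idx i j \<circ> word_map t"

fun eval_word :: "('a, 'i, 'b) sba_scheme \<Rightarrow> 'i opl list \<Rightarrow> 'a \<Rightarrow> 'a" where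
  "eval_word A [] x = x"
| "eval_word A (p # t) x = ops A p (eval_word A t x)"

definition ops_TA :: "'i::wellorder \<Rightarrow> 'i opl set" where
  "ops_TA \<alpha> = {Swap i j | i j. i \<noteq> j \<and> i < \<alpha> \<and> j < \<alpha>}"

definition ops_SA :: "'i::wellorder \<Rightarrow> 'i opl set" where
  "ops_SA \<alpha> = {Swap i j | i j. i \<noteq> j \<and> i < \<alpha> \<and> j < \<alpha>}
              \<union> {Subst i j | i j. i \<noteq> j \<and> i < \<alpha> \<and> j < \<alpha>}"

definition is_BA_endo :: "('a, 'b) bool_alg_scheme \<Rightarrow> ('a \<Rightarrow> 'a) \<Rightarrow> bool" where
  "is_BA_endo A f \<longleftrightarrow>
     (\<forall>x\<in>carrier A. f x \<in> carrier A) \<and>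
     (\<forall>x\<in>carrier A. \<forall>y\<in>carrier A. f (join A x y) = join A (f x) (f y) \<and>
                                     f (meet A x y) = meet A (f x) (f y)) \<and>
     (\<forall>x\<in>carrier A. f (compl A x) = compl A (f x)) \<and>
     f (zero A) = zero A \<and> f (one A) = one A"

definition in_variety :: "'i::wellorder \<Rightarrow> 'i opl set \<Rightarrow> ('a, 'i, 'b) sba_scheme \<Rightarrow> bool" where
  "in_variety \<alpha> Ops A \<longleftrightarrow>
     is_BA A \<and>
     (\<forall>p\<in>Ops. is_BA_endo A (ops A p)) \<and>
     (\<forall>t1 t2. set t1 \<subseteq> Ops \<longrightarrow> set t2 \<subseteq> Ops \<longrightarrow>
        (\<forall>k. k < \<alpha> \<longrightarrow> word_map t1 k = word_map t2 k) \<longrightarrow>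
        (\<forall>x\<in>carrier A. eval_word A t1 x = eval_word A t2 x))"

definition TA :: "'i::wellorder \<Rightarrow> ('a, 'i, 'b) sba_scheme \<Rightarrow> bool" where
  "TA \<alpha> A \<longleftrightarrow> in_variety \<alpha> (ops_TA \<alpha>) A"

definition SA :: "'i::wellorder \<Rightarrow> ('a, 'i, 'b) sba_scheme \<Rightarrow> bool" where
  "SA \<alpha> A \<longleftrightarrow> in_variety \<alpha> (ops_SA \<alpha>) A"

definition is_hom :: "'i opl set \<Rightarrow> ('a, 'i, 'x) sba_scheme \<Rightarrow> ('b, 'i, 'y) sba_scheme
                      \<Rightarrow> ('a \<Rightarrow> 'b) \<Rightarrow> bool" where
  "is_hom Ops A B h \<longleftrightarrow>
     (\<forall>x\<in>carrier A. h x \<in> carrier B) \<and>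
     (\<forall>x\<in>carrier A. \<forall>y\<in>carrier A. h (join A x y) = join B (h x) (h y) \<and>
                                     h (meet A x y) = meet B (h x) (h y)) \<and>
     (\<forall>x\<in>carrier A. h (compl A x) = compl B (h x)) \<and>
     h (zero A) = zero B \<and> h (one A) = one B \<and>
     (\<forall>p\<in>Ops. \<forall>x\<in>carrier A. h (ops A p x) = ops B p (h x))"

definition is_mono :: "'i opl set \<Rightarrow> ('a, 'i, 'x) sba_scheme \<Rightarrow> ('b, 'i, 'y) sba_scheme
                       \<Rightarrow> ('a \<Rightarrow> 'b) \<Rightarrow> bool" where
  "is_mono Ops A B h \<longleftrightarrow> is_hom Ops A B h \<and> inj_on h (carrier A)"

text \<open>The amalgam D is taken in the type ('b + 'c + 'i) list, which is large enough to
  carry (an isomorphic copy of) the subalgebra generated by the images of A1 and A2.\<close>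
definition superamalgamation ::
  "'i::wellorder \<Rightarrow> 'i opl set \<Rightarrow> 'a itself \<Rightarrow> 'b itself \<Rightarrow> 'c itself \<Rightarrow> bool" where
  "superamalgamation \<alpha> Ops (_ :: 'a itself) (_ :: 'b itself) (_ :: 'c itself) \<longleftrightarrow>
    (\<forall>(A0 :: ('a, 'i) sba) (A1 :: ('b, 'i) sba) (A2 :: ('c, 'i) sba) i1 i2.
      in_variety \<alpha> Ops A0 \<longrightarrow> in_variety \<alpha> Ops A1 \<longrightarrow> in_variety \<alpha> Ops A2 \<longrightarrow>
      is_mono Ops A0 A1 i1 \<longrightarrow> is_mono Ops A0 A2 i2 \<longrightarrow>
      (\<exists>(D :: (('b + 'c + 'i) list, 'i) sba) m1 m2.
         in_variety \<alpha> Ops D \<and> is_mono Ops A1 D m1 \<and> is_mono Ops A2 D m2 \<and>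
         (\<forall>a\<in>carrier A0. m1 (i1 a) = m2 (i2 a)) \<and>
         (\<forall>x\<in>carrier A1. \<forall>y\<in>carrier A2. ba_le D (m1 x) (m2 y) \<longrightarrow>
            (\<exists>z\<in>carrier A0. ba_le A1 x (i1 z) \<and> ba_le A2 (i2 z) y)) \<and>
         (\<forall>x\<in>carrier A2. \<forall>y\<in>carrier A1. ba_le D (m2 x) (m1 y) \<longrightarrow>
            (\<exists>z\<in>carrier A0. ba_le A2 x (i2 z) \<and> ba_le A1 (i1 z) y))))"

end

theory Submission
  imports Defs
begin

text \<open>
  A span \<open>A\<^sub>1 \<leftarrow> A\<^sub>0 \<rightarrow> A\<^sub>2\<close> is amalgamated inside a set algebra over its dual space. The
  points are the pairs \<open>(u, v)\<close> of ultrafilters of \<open>A\<^sub>1\<close> and \<open>A\<^sub>2\<close> that agree on \<open>A\<^sub>0\<close>. Every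
  operator is a Boolean endomorphism, so it acts on points by taking preimages; hence so does
  every word, and the word equations of the variety hold in the algebra of finite unions of
  rectangles \<open>{(u, v). x \<in> u \<and> y \<in> v}\<close>. The algebras \<open>A\<^sub>1\<close> and \<open>A\<^sub>2\<close> embed via
  \<open>x \<mapsto> {(u, v). x \<in> u}\<close> and \<open>y \<mapsto> {(u, v). y \<in> v}\<close>, injectively because, \<open>A\<^sub>0\<close> being a
  subalgebra of both, every ultrafilter of one side extends to a compatible pair.
  Superamalgamation is then an interpolation property of ultrafilters: if no \<open>z \<in> A\<^sub>0\<close> satisfies
  \<open>x \<le> i\<^sub>1 z\<close> and \<open>i\<^sub>2 z \<le> y\<close>, the elements \<open>\<not> y \<sqinter> i\<^sub>2 z\<close> with \<open>x \<le> i\<^sub>1 z\<close> generate a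
  proper filter, and an ultrafilter containing them pairs with one containing \<open>x\<close>.
  Nothing depends on the signature, which is why \<open>TA\<^sub>\<alpha>\<close> and \<open>SA\<^sub>\<alpha>\<close> are covered for every \<open>\<alpha>\<close>.
\<close>

locale ba =
  fixes A :: "('a, 'b) bool_alg_scheme"
  assumes is_BA: "is_BA A"
begin

lemmas ba_laws = is_BA[unfolded is_BA_def]

lemma zero_closed [simp]: "zero A \<in> carrier A"
  using ba_laws by blast
lemma one_closed [simp]: "one A \<in> carrier A"
  using ba_laws by blast
lemma join_closed [simp]: "x \<in> carrier A \<Longrightarrow> y \<in> carrier A \<Longrightarrow> join A x y \<in> carrier A"
  using ba_laws by blast
lemma meet_closed [simp]: "x \<in> carrier A \<Longrightarrow> y \<in> carrier A \<Longrightarrow> meet A x y \<in> carrier A"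
  using ba_laws by blast
lemma compl_closed [simp]: "x \<in> carrier A \<Longrightarrow> compl A x \<in> carrier A"
  using ba_laws by blast
lemma join_comm: "x \<in> carrier A \<Longrightarrow> y \<in> carrier A \<Longrightarrow> join A x y = join A y x"
  using ba_laws by blast
lemma meet_comm: "x \<in> carrier A \<Longrightarrow> y \<in> carrier A \<Longrightarrow> meet A x y = meet A y x"
  using ba_laws by blast
lemma join_assoc:
  "x \<in> carrier A \<Longrightarrow> y \<in> carrier A \<Longrightarrow> z \<in> carrier A \<Longrightarrow> join A x (join A y z) = join A (join A x y) z"
  using ba_laws by blast
lemma meet_assoc:
  "x \<in> carrier A \<Longrightarrow> y \<in> carrier A \<Longrightarrow> z \<in> carrier A \<Longrightarrow> meet A x (meet A y z) = meet A (meet A x y) z"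
  using ba_laws by blast
lemma meet_join_distrib:
  "x \<in> carrier A \<Longrightarrow> y \<in> carrier A \<Longrightarrow> z \<in> carrier A \<Longrightarrow>
    meet A x (join A y z) = join A (meet A x y) (meet A x z)"
  using ba_laws by blast
lemma join_meet_distrib:
  "x \<in> carrier A \<Longrightarrow> y \<in> carrier A \<Longrightarrow> z \<in> carrier A \<Longrightarrow>
    join A x (meet A y z) = meet A (join A x y) (join A x z)"
  using ba_laws by blast
lemma join_meet_absorb: "x \<in> carrier A \<Longrightarrow> y \<in> carrier A \<Longrightarrow> join A x (meet A x y) = x"
  using ba_laws by blast
lemma meet_join_absorb: "x \<in> carrier A \<Longrightarrow> y \<in> carrier A \<Longrightarrow> meet A x (join A x y) = x"
  using ba_laws by blast
lemma join_zero [simp]: "x \<in> carrier A \<Longrightarrow> join A x (zero A) = x"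
  using ba_laws by blast
lemma meet_one [simp]: "x \<in> carrier A \<Longrightarrow> meet A x (one A) = x"
  using ba_laws by blast
lemma join_compl [simp]: "x \<in> carrier A \<Longrightarrow> join A x (compl A x) = one A"
  using ba_laws by blast
lemma meet_compl [simp]: "x \<in> carrier A \<Longrightarrow> meet A x (compl A x) = zero A"
  using ba_laws by blast

lemma meet_idem [simp]: "x \<in> carrier A \<Longrightarrow> meet A x x = x"
  using meet_join_absorb[of x "meet A x x"] join_meet_absorb[of x x] by simp

lemma meet_zero [simp]: "x \<in> carrier A \<Longrightarrow> meet A x (zero A) = zero A"
  using meet_assoc[of x x "compl A x"] by simp

lemma zero_join [simp]: "x \<in> carrier A \<Longrightarrow> join A (zero A) x = x"
  using join_comm[of "zero A" x] by simp

lemma one_meet [simp]: "x \<in> carrier A \<Longrightarrow> meet A (one A) x = x"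
  using meet_comm[of "one A" x] by simp

lemma ba_le_refl: "x \<in> carrier A \<Longrightarrow> ba_le A x x"
  unfolding ba_le_def by simp

lemma ba_le_trans:
  "x \<in> carrier A \<Longrightarrow> y \<in> carrier A \<Longrightarrow> z \<in> carrier A \<Longrightarrow> ba_le A x y \<Longrightarrow> ba_le A y z \<Longrightarrow> ba_le A x z"
  unfolding ba_le_def using meet_assoc[of x y z] by simp

lemma ba_le_antisym: "x \<in> carrier A \<Longrightarrow> y \<in> carrier A \<Longrightarrow> ba_le A x y \<Longrightarrow> ba_le A y x \<Longrightarrow> x = y"
  unfolding ba_le_def using meet_comm[of x y] by simp

lemma ba_le_one: "x \<in> carrier A \<Longrightarrow> ba_le A x (one A)"
  unfolding ba_le_def by simp

lemma ba_le_zero_iff: "x \<in> carrier A \<Longrightarrow> ba_le A x (zero A) \<longleftrightarrow> x = zero A"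
  unfolding ba_le_def by auto

lemma meet_ba_le1: "x \<in> carrier A \<Longrightarrow> y \<in> carrier A \<Longrightarrow> ba_le A (meet A x y) x"
  unfolding ba_le_def using meet_comm[of "meet A x y" x] meet_assoc[of x x y] by simp

lemma meet_ba_le2: "x \<in> carrier A \<Longrightarrow> y \<in> carrier A \<Longrightarrow> ba_le A (meet A x y) y"
  unfolding ba_le_def using meet_assoc[of x y y] by simp

lemma ba_le_join1: "x \<in> carrier A \<Longrightarrow> y \<in> carrier A \<Longrightarrow> ba_le A x (join A x y)"
  unfolding ba_le_def by (simp add: meet_join_absorb)

lemma ba_le_join2: "x \<in> carrier A \<Longrightarrow> y \<in> carrier A \<Longrightarrow> ba_le A y (join A x y)"
  using ba_le_join1[of y x] join_comm[of x y] by simp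

lemma ba_le_meetI:
  "x \<in> carrier A \<Longrightarrow> y \<in> carrier A \<Longrightarrow> z \<in> carrier A \<Longrightarrow> ba_le A x y \<Longrightarrow> ba_le A x z \<Longrightarrow>
    ba_le A x (meet A y z)"
  unfolding ba_le_def using meet_assoc[of x y z] by simp

lemma ba_le_of_meet_compl_eq_zero:
  assumes "x \<in> carrier A" "y \<in> carrier A" "meet A x (compl A y) = zero A"
  shows "ba_le A x y"
  using assms meet_join_distrib[of x y "compl A y"] unfolding ba_le_def by simp

lemma ba_le_compl_of_meet_eq_zero:
  assumes "x \<in> carrier A" "y \<in> carrier A" "meet A x y = zero A"
  shows "ba_le A x (compl A y)"
  using assms meet_join_distrib[of x y "compl A y"] unfolding ba_le_def by simp

lemma join_meet_compls_zero:
  assumes "x \<in> carrier A" "y \<in> carrier A"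
  shows "meet A (join A x y) (meet A (compl A x) (compl A y)) = zero A"
proof -
  let ?c = "meet A (compl A x) (compl A y)"
  have "meet A (join A x y) ?c = join A (meet A ?c x) (meet A ?c y)"
    using assms meet_comm[of "join A x y" ?c] meet_join_distrib[of ?c x y] by simp
  also have "meet A ?c x = zero A"
    using assms meet_comm[of ?c x] meet_assoc[of x "compl A x" "compl A y"]
      meet_comm[of "zero A" "compl A y"] by simp
  also have "meet A ?c y = zero A"
    using assms meet_assoc[of "compl A x" "compl A y" y] meet_comm[of "compl A y" y] by simp
  finally show ?thesis using assms by simp
qed

lemma meet_ba_le_meet1:
  "x \<in> carrier A \<Longrightarrow> p \<in> carrier A \<Longrightarrow> q \<in> carrier A \<Longrightarrow> ba_le A (meet A x (meet A p q)) (meet A x p)"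
  using meet_ba_le1[of "meet A x p" q] meet_assoc[of x p q] by simp

lemma meet_ba_le_meet2:
  "x \<in> carrier A \<Longrightarrow> p \<in> carrier A \<Longrightarrow> q \<in> carrier A \<Longrightarrow> ba_le A (meet A x (meet A p q)) (meet A x q)"
  using meet_ba_le_meet1[of x q p] meet_comm[of p q] by simp

end

definition ba_hom :: "('a, 'x) bool_alg_scheme \<Rightarrow> ('b, 'y) bool_alg_scheme \<Rightarrow> ('a \<Rightarrow> 'b) \<Rightarrow> bool" where
  "ba_hom A B h \<longleftrightarrow> (\<forall>x\<in>carrier A. h x \<in> carrier B) \<and>
     (\<forall>x\<in>carrier A. \<forall>y\<in>carrier A. h (join A x y) = join B (h x) (h y) \<and>
                                     h (meet A x y) = meet B (h x) (h y)) \<and>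
     (\<forall>x\<in>carrier A. h (compl A x) = compl B (h x)) \<and>
     h (zero A) = zero B \<and> h (one A) = one B"

lemma ba_homD:
  assumes "ba_hom A B h"
  shows "\<And>x. x \<in> carrier A \<Longrightarrow> h x \<in> carrier B"
    "\<And>x y. x \<in> carrier A \<Longrightarrow> y \<in> carrier A \<Longrightarrow> h (join A x y) = join B (h x) (h y)"
    "\<And>x y. x \<in> carrier A \<Longrightarrow> y \<in> carrier A \<Longrightarrow> h (meet A x y) = meet B (h x) (h y)"
    "\<And>x. x \<in> carrier A \<Longrightarrow> h (compl A x) = compl B (h x)"
    "h (zero A) = zero B" "h (one A) = one B"
  using assms unfolding ba_hom_def by auto

lemma ba_hom_id: "ba_hom A A id"
  unfolding ba_hom_def by simp

definition is_filter :: "('a, 'b) bool_alg_scheme \<Rightarrow> 'a set \<Rightarrow> bool" where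
  "is_filter A F \<longleftrightarrow> F \<subseteq> carrier A \<and> one A \<in> F \<and> (\<forall>x\<in>F. \<forall>y\<in>F. meet A x y \<in> F) \<and>
     (\<forall>x\<in>F. \<forall>y\<in>carrier A. ba_le A x y \<longrightarrow> y \<in> F)"

definition is_ultrafilter :: "('a, 'b) bool_alg_scheme \<Rightarrow> 'a set \<Rightarrow> bool" where
  "is_ultrafilter A u \<longleftrightarrow> u \<subseteq> carrier A \<and> zero A \<notin> u \<and> one A \<in> u \<and>
     (\<forall>x\<in>carrier A. \<forall>y\<in>carrier A. (join A x y \<in> u \<longleftrightarrow> x \<in> u \<or> y \<in> u) \<and>
         (meet A x y \<in> u \<longleftrightarrow> x \<in> u \<and> y \<in> u)) \<and>
     (\<forall>x\<in>carrier A. compl A x \<in> u \<longleftrightarrow> x \<notin> u)"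

lemma ultrafilterD:
  assumes "is_ultrafilter A u"
  shows "u \<subseteq> carrier A" "zero A \<notin> u" "one A \<in> u"
    "\<And>x y. x \<in> carrier A \<Longrightarrow> y \<in> carrier A \<Longrightarrow> join A x y \<in> u \<longleftrightarrow> x \<in> u \<or> y \<in> u"
    "\<And>x y. x \<in> carrier A \<Longrightarrow> y \<in> carrier A \<Longrightarrow> meet A x y \<in> u \<longleftrightarrow> x \<in> u \<and> y \<in> u"
    "\<And>x. x \<in> carrier A \<Longrightarrow> compl A x \<in> u \<longleftrightarrow> x \<notin> u"
  using assms unfolding is_ultrafilter_def by blast+

definition downward_directed :: "('a, 'b) bool_alg_scheme \<Rightarrow> 'a set \<Rightarrow> bool" where
  "downward_directed A G \<longleftrightarrow> (\<forall>g1\<in>G. \<forall>g2\<in>G. \<exists>g\<in>G. ba_le A g g1 \<and> ba_le A g g2)"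

definition up_closure :: "('a, 'b) bool_alg_scheme \<Rightarrow> 'a set \<Rightarrow> 'a set" where
  "up_closure A G = {y \<in> carrier A. \<exists>g\<in>G. ba_le A g y}"

lemma ultrafilter_preimage:
  assumes "is_BA A" "ba_hom A B h" "is_ultrafilter B u"
  shows "is_ultrafilter A {a \<in> carrier A. h a \<in> u}"
proof -
  interpret ba A by (rule ba.intro) (rule assms(1))
  show ?thesis
    using ultrafilterD[OF assms(3)] ba_homD[OF assms(2)] unfolding is_ultrafilter_def by auto
qed

context ba
begin

lemma up_closure_filter:
  assumes G: "G \<subseteq> carrier A" "G \<noteq> {}" "downward_directed A G"
  shows "is_filter A (up_closure A G)"
  unfolding is_filter_def
proof (intro conjI ballI impI)
  show "up_closure A G \<subseteq> carrier A"
    unfolding up_closure_def by blast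
  show "one A \<in> up_closure A G"
    using G(1,2) ba_le_one unfolding up_closure_def by fastforce
next
  fix a b assume "a \<in> up_closure A G" "b \<in> up_closure A G"
  then obtain g1 g2 where g: "g1 \<in> G" "ba_le A g1 a" "g2 \<in> G" "ba_le A g2 b"
    and ab: "a \<in> carrier A" "b \<in> carrier A"
    unfolding up_closure_def by blast
  then obtain g where "g \<in> G" "ba_le A g g1" "ba_le A g g2"
    using G(3) unfolding downward_directed_def by blast
  with g ab G(1) have "ba_le A g (meet A a b)"
    by (intro ba_le_meetI ba_le_trans[of g g1 a] ba_le_trans[of g g2 b]) auto
  with \<open>g \<in> G\<close> ab show "meet A a b \<in> up_closure A G"
    unfolding up_closure_def by auto
next
  fix a b assume "a \<in> up_closure A G" "b \<in> carrier A" "ba_le A a b"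
  with G(1) show "b \<in> up_closure A G"
    unfolding up_closure_def by (blast intro: ba_le_trans)
qed

lemma subset_up_closure: "G \<subseteq> carrier A \<Longrightarrow> G \<subseteq> up_closure A G"
  unfolding up_closure_def using ba_le_refl by blast

lemma zero_in_up_closure_iff: "G \<subseteq> carrier A \<Longrightarrow> zero A \<in> up_closure A G \<longleftrightarrow> zero A \<in> G"
  unfolding up_closure_def using ba_le_zero_iff by blast

lemma filter_Union_chain:
  assumes "C \<noteq> {}" "\<And>F. F \<in> C \<Longrightarrow> is_filter A F" "\<And>F F'. F \<in> C \<Longrightarrow> F' \<in> C \<Longrightarrow> F \<subseteq> F' \<or> F' \<subseteq> F"
  shows "is_filter A (\<Union>C)"
  unfolding is_filter_def
proof (intro conjI ballI impI)
  fix a b assume "a \<in> \<Union>C" "b \<in> \<Union>C"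
  then obtain F F' where "F \<in> C" "F' \<in> C" "a \<in> F" "b \<in> F'"
    by blast
  then obtain F'' where "F'' \<in> C" "a \<in> F''" "b \<in> F''"
    using assms(3)[of F F'] by blast
  with assms(2)[of F''] show "meet A a b \<in> \<Union>C"
    unfolding is_filter_def by blast
next
  fix a b assume "a \<in> \<Union>C" "b \<in> carrier A" "ba_le A a b"
  then obtain F where "F \<in> C" "a \<in> F"
    by blast
  with assms(2)[of F] \<open>b \<in> carrier A\<close> \<open>ba_le A a b\<close> show "b \<in> \<Union>C"
    unfolding is_filter_def by blast
next
  show "\<Union>C \<subseteq> carrier A"
    using assms(2) unfolding is_filter_def by blast
  show "one A \<in> \<Union>C"
    using assms(1,2) unfolding is_filter_def by blast
qed

lemma meet_image_directed:
  assumes h: "ba_hom A0 A h" and c: "c \<in> carrier A"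
    and W: "W \<subseteq> carrier A0" "\<And>a b. a \<in> W \<Longrightarrow> b \<in> W \<Longrightarrow> meet A0 a b \<in> W"
  shows "downward_directed A ((\<lambda>a. meet A c (h a)) ` W)"
  unfolding downward_directed_def
proof (intro ballI)
  fix g1 g2 assume "g1 \<in> (\<lambda>a. meet A c (h a)) ` W" "g2 \<in> (\<lambda>a. meet A c (h a)) ` W"
  then obtain a b where ab: "a \<in> W" "b \<in> W" "g1 = meet A c (h a)" "g2 = meet A c (h b)"
    by blast
  then have "a \<in> carrier A0" "b \<in> carrier A0"
    using W(1) by auto
  then have "h (meet A0 a b) = meet A (h a) (h b)" "h a \<in> carrier A" "h b \<in> carrier A"
    using ba_homD(1,3)[OF h] by auto
  then have "ba_le A (meet A c (h (meet A0 a b))) g1" "ba_le A (meet A c (h (meet A0 a b))) g2"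
    using meet_ba_le_meet1 meet_ba_le_meet2 c unfolding ab by simp_all
  with ab W(2) show "\<exists>g\<in>(\<lambda>a. meet A c (h a)) ` W. ba_le A g g1 \<and> ba_le A g g2"
    by blast
qed

lemma filter_ultrafilterI:
  assumes M: "is_filter A M" and zero: "zero A \<notin> M"
    and mem_or_compl: "\<And>x. x \<in> carrier A \<Longrightarrow> x \<in> M \<or> compl A x \<in> M"
  shows "is_ultrafilter A M"
proof -
  have MC: "M \<subseteq> carrier A" and one: "one A \<in> M"
    and meet: "\<And>x y. x \<in> M \<Longrightarrow> y \<in> M \<Longrightarrow> meet A x y \<in> M"
    and up: "\<And>x y. x \<in> M \<Longrightarrow> y \<in> carrier A \<Longrightarrow> ba_le A x y \<Longrightarrow> y \<in> M"
    using M unfolding is_filter_def by blast+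
  have meet_iff: "meet A x y \<in> M \<longleftrightarrow> x \<in> M \<and> y \<in> M" if "x \<in> carrier A" "y \<in> carrier A" for x y
    using that meet up[of "meet A x y" x] up[of "meet A x y" y] meet_ba_le1[OF that] meet_ba_le2[OF that]
    by auto
  have compl_iff: "compl A x \<in> M \<longleftrightarrow> x \<notin> M" if "x \<in> carrier A" for x
    using mem_or_compl[OF that] meet[of x "compl A x"] zero that by auto
  have join_iff: "join A x y \<in> M \<longleftrightarrow> x \<in> M \<or> y \<in> M" if x: "x \<in> carrier A" and y: "y \<in> carrier A" for x y
  proof
    assume xy: "join A x y \<in> M"
    show "x \<in> M \<or> y \<in> M"
    proof (rule ccontr)
      assume "\<not> (x \<in> M \<or> y \<in> M)"
      then have "meet A (compl A x) (compl A y) \<in> M"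
        using compl_iff x y meet by auto
      with xy have "meet A (join A x y) (meet A (compl A x) (compl A y)) \<in> M"
        using meet by blast
      then show False
        using join_meet_compls_zero[OF x y] zero by simp
    qed
  next
    assume "x \<in> M \<or> y \<in> M"
    then show "join A x y \<in> M"
      using up[of x "join A x y"] up[of y "join A x y"] ba_le_join1[OF x y] ba_le_join2[OF x y] x y by auto
  qed
  show ?thesis
    unfolding is_ultrafilter_def using MC zero one meet_iff compl_iff join_iff by blast
qed

lemma maximal_filter_mem_or_compl:
  assumes M: "is_filter A M"
    and maximal: "\<And>F. is_filter A F \<Longrightarrow> zero A \<notin> F \<Longrightarrow> M \<subseteq> F \<Longrightarrow> F = M"
    and x: "x \<in> carrier A"
  shows "x \<in> M \<or> compl A x \<in> M"
proof (rule ccontr)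
  assume neither: "\<not> (x \<in> M \<or> compl A x \<in> M)"
  have MC: "M \<subseteq> carrier A" and one: "one A \<in> M" and meet: "\<And>a b. a \<in> M \<Longrightarrow> b \<in> M \<Longrightarrow> meet A a b \<in> M"
    and up: "\<And>a b. a \<in> M \<Longrightarrow> b \<in> carrier A \<Longrightarrow> ba_le A a b \<Longrightarrow> b \<in> M"
    using M unfolding is_filter_def by blast+
  let ?G = "meet A x ` M"
  have GC: "?G \<subseteq> carrier A"
    using MC x by auto
  have "downward_directed A ?G"
    using meet_image_directed[OF ba_hom_id x MC meet] by simp
  then have "is_filter A (up_closure A ?G)"
    using up_closure_filter[OF GC] one by blast
  moreover have "M \<subseteq> up_closure A ?G"
    unfolding up_closure_def using MC x meet_ba_le2 by fastforce
  moreover have "x \<in> up_closure A ?G"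
    unfolding up_closure_def using one x ba_le_refl[of x] by force
  ultimately have "zero A \<in> up_closure A ?G"
    using maximal neither by blast
  then obtain g where g: "g \<in> M" "meet A x g = zero A"
    using zero_in_up_closure_iff[OF GC] by auto
  then have "ba_le A g (compl A x)"
    using ba_le_compl_of_meet_eq_zero[of g x] meet_comm[of x g] MC x by auto
  with g neither up[of g "compl A x"] x show False
    by simp
qed

lemma maximal_filter_ultrafilter:
  assumes "is_filter A M" "zero A \<notin> M"
    and "\<And>F. is_filter A F \<Longrightarrow> zero A \<notin> F \<Longrightarrow> M \<subseteq> F \<Longrightarrow> F = M"
  shows "is_ultrafilter A M"
  using assms by (intro filter_ultrafilterI maximal_filter_mem_or_compl)

lemma ultrafilter_exists:
  assumes G: "G \<subseteq> carrier A" "G \<noteq> {}" "downward_directed A G" and zero: "zero A \<notin> G"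
  shows "\<exists>u. is_ultrafilter A u \<and> G \<subseteq> u"
proof -
  define S where "S = {F. is_filter A F \<and> zero A \<notin> F \<and> up_closure A G \<subseteq> F}"
  have "up_closure A G \<in> S"
    unfolding S_def using up_closure_filter[OF G] zero_in_up_closure_iff[OF G(1)] zero by blast
  moreover have "\<Union>C \<in> S" if "C \<noteq> {}" "subset.chain S C" for C
    using that filter_Union_chain[of C] unfolding S_def subset.chain_def by blast
  ultimately obtain M where M: "M \<in> S" and maximal: "\<And>F. F \<in> S \<Longrightarrow> M \<subseteq> F \<Longrightarrow> F = M"
    using subset_Zorn_nonempty[of S] by blast
  have "is_ultrafilter A M"
    using M maximal by (intro maximal_filter_ultrafilter) (auto simp: S_def)
  moreover have "G \<subseteq> M"
    using M subset_up_closure[OF G(1)] unfolding S_def by blast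
  ultimately show ?thesis
    by blast
qed

lemma ultrafilter_containing:
  assumes "x \<in> carrier A" "x \<noteq> zero A"
  shows "\<exists>u. is_ultrafilter A u \<and> x \<in> u"
  using ultrafilter_exists[of "{x}"] assms ba_le_refl unfolding downward_directed_def by auto

lemma ultrafilter_separating:
  assumes x: "x \<in> carrier A" and y: "y \<in> carrier A" and "x \<noteq> y"
  shows "\<exists>u. is_ultrafilter A u \<and> (x \<in> u \<longleftrightarrow> y \<notin> u)"
proof -
  have "meet A x (compl A y) \<noteq> zero A \<or> meet A y (compl A x) \<noteq> zero A"
    using ba_le_of_meet_compl_eq_zero[OF x y] ba_le_of_meet_compl_eq_zero[OF y x] ba_le_antisym[OF x y] \<open>x \<noteq> y\<close> by blast
  then obtain a b where ab: "a \<in> carrier A" "b \<in> carrier A" "{a, b} = {x, y}" "meet A a (compl A b) \<noteq> zero A"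
    using x y by blast
  then obtain u where u: "is_ultrafilter A u" "meet A a (compl A b) \<in> u"
    using ultrafilter_containing[of "meet A a (compl A b)"] by auto
  then have "a \<in> u" "b \<notin> u"
    using ultrafilterD(5,6)[OF u(1)] ab(1,2) by auto
  with u(1) ab(3) show ?thesis
    by (auto simp: doubleton_eq_iff)
qed

lemma ultrafilter_containing_meets:
  assumes h: "ba_hom A0 A h" and c: "c \<in> carrier A"
    and W: "W \<subseteq> carrier A0" "W \<noteq> {}" "\<And>a b. a \<in> W \<Longrightarrow> b \<in> W \<Longrightarrow> meet A0 a b \<in> W"
    and nonzero: "\<And>a. a \<in> W \<Longrightarrow> meet A c (h a) \<noteq> zero A"
  shows "\<exists>u. is_ultrafilter A u \<and> (\<forall>a\<in>W. meet A c (h a) \<in> u)"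
proof -
  have "downward_directed A ((\<lambda>a. meet A c (h a)) ` W)"
    using meet_image_directed[OF h c W(1,3)] .
  moreover have "(\<lambda>a. meet A c (h a)) ` W \<subseteq> carrier A"
    using W(1) c ba_homD(1)[OF h] by auto
  ultimately show ?thesis
    using ultrafilter_exists[of "(\<lambda>a. meet A c (h a)) ` W"] W(2) nonzero by force
qed

lemma ultrafilter_extend:
  assumes i: "ba_hom A0 A i" and w: "is_ultrafilter A0 w" and x: "x \<in> carrier A"
    and nonzero: "\<And>a. a \<in> w \<Longrightarrow> meet A x (i a) \<noteq> zero A"
  shows "\<exists>u. is_ultrafilter A u \<and> x \<in> u \<and> (\<forall>a\<in>carrier A0. i a \<in> u \<longleftrightarrow> a \<in> w)"
proof -
  note wD = ultrafilterD[OF w] and iD = ba_homD[OF i]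
  have "meet A0 a b \<in> w" if "a \<in> w" "b \<in> w" for a b
    using that wD(1,5) by blast
  then obtain u where u: "is_ultrafilter A u" and mem: "\<And>a. a \<in> w \<Longrightarrow> meet A x (i a) \<in> u"
    using ultrafilter_containing_meets[OF i x wD(1)] wD(3) nonzero by blast
  note uD = ultrafilterD[OF u]
  have in_u: "x \<in> u \<and> i a \<in> u" if "a \<in> w" for a
    using mem[OF that] uD(5)[OF x iD(1)] wD(1) that by auto
  have "i a \<in> u \<longleftrightarrow> a \<in> w" if a: "a \<in> carrier A0" for a
  proof
    assume "i a \<in> u"
    moreover have "compl A (i a) \<in> u" if "a \<notin> w"
      using in_u[of "compl A0 a"] that wD(6)[OF a] iD(4)[OF a] by auto
    ultimately show "a \<in> w"
      using uD(6)[OF iD(1)[OF a]] by blast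
  qed (use in_u in blast)
  then show ?thesis
    using u in_u wD(3) by blast
qed

lemma ultrafilter_lift:
  assumes A0: "is_BA A0" and i: "ba_hom A0 A i" and inj: "inj_on i (carrier A0)"
    and w: "is_ultrafilter A0 w"
  shows "\<exists>u. is_ultrafilter A u \<and> (\<forall>a\<in>carrier A0. i a \<in> u \<longleftrightarrow> a \<in> w)"
proof -
  have "meet A (one A) (i a) \<noteq> zero A" if "a \<in> w" for a
  proof
    assume "meet A (one A) (i a) = zero A"
    moreover have a: "a \<in> carrier A0"
      using ultrafilterD(1)[OF w] that by auto
    ultimately have "i a = i (zero A0)"
      using ba_homD(1,5)[OF i] by simp
    then have "a = zero A0"
      using inj a ba.zero_closed[OF ba.intro, OF A0] unfolding inj_on_def by blast
    with that ultrafilterD(2)[OF w] show False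
      by simp
  qed
  then show ?thesis
    using ultrafilter_extend[OF i w one_closed] by blast
qed

end

lemma ultrafilter_interpolation:
  assumes A0: "is_BA A0" and A1: "is_BA A1" and A2: "is_BA A2"
    and i1: "ba_hom A0 A1 i1" and i2: "ba_hom A0 A2 i2"
    and x: "x \<in> carrier A1" and y: "y \<in> carrier A2"
    and pairs: "\<And>u v. is_ultrafilter A1 u \<Longrightarrow> is_ultrafilter A2 v \<Longrightarrow>
      (\<forall>a\<in>carrier A0. i1 a \<in> u \<longleftrightarrow> i2 a \<in> v) \<Longrightarrow> x \<in> u \<Longrightarrow> y \<in> v"
  shows "\<exists>z\<in>carrier A0. ba_le A1 x (i1 z) \<and> ba_le A2 (i2 z) y"
proof (rule ccontr)
  interpret a0: ba A0 by (rule ba.intro) (rule A0)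
  interpret a1: ba A1 by (rule ba.intro) (rule A1)
  interpret a2: ba A2 by (rule ba.intro) (rule A2)
  note d1 = ba_homD[OF i1] and d2 = ba_homD[OF i2]
  assume no_interpolant: "\<not> ?thesis"
  define W where "W = {a \<in> carrier A0. ba_le A1 x (i1 a)}"
  have W: "W \<subseteq> carrier A0" "one A0 \<in> W"
    unfolding W_def using a1.ba_le_one[OF x] d1(6) by auto
  have "meet A0 a b \<in> W" if "a \<in> W" "b \<in> W" for a b
    using that d1(1,3) x a1.ba_le_meetI unfolding W_def by auto
  moreover have "meet A2 (compl A2 y) (i2 a) \<noteq> zero A2" if "a \<in> W" for a
  proof
    assume "meet A2 (compl A2 y) (i2 a) = zero A2"
    with that have "ba_le A2 (i2 a) y"
      using a2.ba_le_of_meet_compl_eq_zero[of "i2 a" y] a2.meet_comm[of "i2 a" "compl A2 y"] W(1) d2(1) y by auto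
    with that no_interpolant show False
      unfolding W_def by blast
  qed
  ultimately obtain v where v: "is_ultrafilter A2 v" and mem: "\<forall>a\<in>W. meet A2 (compl A2 y) (i2 a) \<in> v"
    using a2.ultrafilter_containing_meets[OF i2 a2.compl_closed[OF y] W(1)] W(2) by blast
  note vD = ultrafilterD[OF v]
  have "y \<notin> v"
    using mem W(2) d2(6) vD(5,6) y by auto
  define w where "w = {a \<in> carrier A0. i2 a \<in> v}"
  have w: "is_ultrafilter A0 w"
    unfolding w_def by (rule ultrafilter_preimage[OF A0 i2 v])
  have "meet A1 x (i1 a) \<noteq> zero A1" if a: "a \<in> w" for a
  proof
    have aC: "a \<in> carrier A0"
      using a unfolding w_def by auto
    assume "meet A1 x (i1 a) = zero A1"
    then have "compl A0 a \<in> W"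
      using a1.ba_le_compl_of_meet_eq_zero[OF x d1(1)[OF aC]] d1(4)[OF aC] aC unfolding W_def by simp
    then have "compl A2 (i2 a) \<in> v"
      using mem vD(5) y d2(1,4) aC by auto
    with a vD(6) d2(1) aC show False
      unfolding w_def by auto
  qed
  then obtain u where "is_ultrafilter A1 u" "x \<in> u" "\<forall>a\<in>carrier A0. i1 a \<in> u \<longleftrightarrow> a \<in> w"
    using a1.ultrafilter_extend[OF i1 w x] by blast
  with pairs[OF _ v] \<open>y \<notin> v\<close> show False
    unfolding w_def by auto
qed

lemma is_hom_ba_hom: "is_hom Ops A B h \<Longrightarrow> ba_hom A B h"
  unfolding is_hom_def ba_hom_def by blast

lemma is_BA_endo_ba_hom: "is_BA_endo A f \<Longrightarrow> ba_hom A A f"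
  unfolding is_BA_endo_def ba_hom_def by blast

lemma in_variety_is_BA: "in_variety \<alpha> Ops A \<Longrightarrow> is_BA A"
  unfolding in_variety_def by blast

lemma in_variety_endo: "in_variety \<alpha> Ops A \<Longrightarrow> p \<in> Ops \<Longrightarrow> is_BA_endo A (ops A p)"
  unfolding in_variety_def by blast

lemma in_variety_ops_closed: "in_variety \<alpha> Ops A \<Longrightarrow> p \<in> Ops \<Longrightarrow> x \<in> carrier A \<Longrightarrow> ops A p x \<in> carrier A"
  using in_variety_endo unfolding is_BA_endo_def by blast

lemma in_variety_word_eq:
  "in_variety \<alpha> Ops A \<Longrightarrow> set t1 \<subseteq> Ops \<Longrightarrow> set t2 \<subseteq> Ops \<Longrightarrow> (\<And>k. k < \<alpha> \<Longrightarrow> word_map t1 k = word_map t2 k) \<Longrightarrow>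
    x \<in> carrier A \<Longrightarrow> eval_word A t1 x = eval_word A t2 x"
  unfolding in_variety_def by blast

lemma eval_word_closed:
  "in_variety \<alpha> Ops A \<Longrightarrow> set t \<subseteq> Ops \<Longrightarrow> x \<in> carrier A \<Longrightarrow> eval_word A t x \<in> carrier A"
  by (induction t) (auto intro: in_variety_ops_closed)

definition op_preimage :: "('a, 'i, 'x) sba_scheme \<Rightarrow> 'i opl \<Rightarrow> 'a set \<Rightarrow> 'a set" where
  "op_preimage A p u = {x \<in> carrier A. ops A p x \<in> u}"

definition word_preimage :: "('a, 'i, 'x) sba_scheme \<Rightarrow> 'i opl list \<Rightarrow> 'a set \<Rightarrow> 'a set" where
  "word_preimage A t u = {x \<in> carrier A. eval_word A t x \<in> u}"

lemma ultrafilter_op_preimage: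
  "in_variety \<alpha> Ops A \<Longrightarrow> p \<in> Ops \<Longrightarrow> is_ultrafilter A u \<Longrightarrow> is_ultrafilter A (op_preimage A p u)"
  unfolding op_preimage_def
  by (rule ultrafilter_preimage[OF in_variety_is_BA is_BA_endo_ba_hom[OF in_variety_endo]])

lemma word_preimage_Nil: "u \<subseteq> carrier A \<Longrightarrow> word_preimage A [] u = u"
  unfolding word_preimage_def by auto

lemma word_preimage_Cons:
  "in_variety \<alpha> Ops A \<Longrightarrow> set (p # t) \<subseteq> Ops \<Longrightarrow>
    word_preimage A (p # t) u = word_preimage A t (op_preimage A p u)"
  unfolding word_preimage_def op_preimage_def using eval_word_closed[of \<alpha> Ops A t] by auto

lemma word_preimage_eq:
  "in_variety \<alpha> Ops A \<Longrightarrow> set t1 \<subseteq> Ops \<Longrightarrow> set t2 \<subseteq> Ops \<Longrightarrow> (\<And>k. k < \<alpha> \<Longrightarrow> word_map t1 k = word_map t2 k) \<Longrightarrow>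
    word_preimage A t1 u = word_preimage A t2 u"
  unfolding word_preimage_def using in_variety_word_eq[of \<alpha> Ops A t1 t2] by auto

locale mono_span =
  fixes \<alpha> :: "'i::wellorder" and Ops :: "'i opl set"
    and A0 :: "('a, 'i) sba" and A1 :: "('b, 'i) sba" and A2 :: "('c, 'i) sba"
    and i1 :: "'a \<Rightarrow> 'b" and i2 :: "'a \<Rightarrow> 'c"
  assumes V0: "in_variety \<alpha> Ops A0" and V1: "in_variety \<alpha> Ops A1" and V2: "in_variety \<alpha> Ops A2"
    and M1: "is_mono Ops A0 A1 i1" and M2: "is_mono Ops A0 A2 i2"
begin

sublocale a0: ba A0
  using V0 by (intro ba.intro in_variety_is_BA)

sublocale a1: ba A1
  using V1 by (intro ba.intro in_variety_is_BA)

sublocale a2: ba A2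
  using V2 by (intro ba.intro in_variety_is_BA)

lemma i1_ba_hom: "ba_hom A0 A1 i1" and i2_ba_hom: "ba_hom A0 A2 i2"
  using M1 M2 unfolding is_mono_def by (auto intro: is_hom_ba_hom)

lemma i1_ops: "p \<in> Ops \<Longrightarrow> a \<in> carrier A0 \<Longrightarrow> ops A1 p (i1 a) = i1 (ops A0 p a)"
  and i2_ops: "p \<in> Ops \<Longrightarrow> a \<in> carrier A0 \<Longrightarrow> ops A2 p (i2 a) = i2 (ops A0 p a)"
  using M1 M2 unfolding is_mono_def is_hom_def by auto

definition compat_pairs :: "('b set \<times> 'c set) set" where
  "compat_pairs = {(u, v). is_ultrafilter A1 u \<and> is_ultrafilter A2 v \<and> (\<forall>a\<in>carrier A0. i1 a \<in> u \<longleftrightarrow> i2 a \<in> v)}"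

lemma compat_pairsD:
  assumes "(u, v) \<in> compat_pairs"
  shows "is_ultrafilter A1 u" "is_ultrafilter A2 v" "\<And>a. a \<in> carrier A0 \<Longrightarrow> i1 a \<in> u \<longleftrightarrow> i2 a \<in> v"
  using assms unfolding compat_pairs_def by auto

lemma op_preimage_compat_pairs:
  assumes p: "p \<in> Ops" and uv: "(u, v) \<in> compat_pairs"
  shows "(op_preimage A1 p u, op_preimage A2 p v) \<in> compat_pairs"
proof -
  have "i1 a \<in> op_preimage A1 p u \<longleftrightarrow> i2 a \<in> op_preimage A2 p v" if a: "a \<in> carrier A0" for a
    using compat_pairsD(3)[OF uv in_variety_ops_closed[OF V0 p a]] i1_ops[OF p a] i2_ops[OF p a]
      ba_homD(1)[OF i1_ba_hom a] ba_homD(1)[OF i2_ba_hom a]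
    unfolding op_preimage_def by auto
  then show ?thesis
    using ultrafilter_op_preimage[OF V1 p compat_pairsD(1)[OF uv]] ultrafilter_op_preimage[OF V2 p compat_pairsD(2)[OF uv]]
    unfolding compat_pairs_def by auto
qed

lemma compat_pair_exists_fst:
  assumes "is_ultrafilter A1 u"
  shows "\<exists>v. (u, v) \<in> compat_pairs"
proof -
  have "is_ultrafilter A0 {a \<in> carrier A0. i1 a \<in> u}"
    by (rule ultrafilter_preimage[OF a0.is_BA i1_ba_hom assms])
  then obtain v where "is_ultrafilter A2 v" "\<forall>a\<in>carrier A0. i2 a \<in> v \<longleftrightarrow> i1 a \<in> u"
    using a2.ultrafilter_lift[OF a0.is_BA i2_ba_hom] M2 unfolding is_mono_def by blast
  with assms show ?thesis
    unfolding compat_pairs_def by auto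
qed

lemma compat_pair_exists_snd:
  assumes "is_ultrafilter A2 v"
  shows "\<exists>u. (u, v) \<in> compat_pairs"
proof -
  have "is_ultrafilter A0 {a \<in> carrier A0. i2 a \<in> v}"
    by (rule ultrafilter_preimage[OF a0.is_BA i2_ba_hom assms])
  then obtain u where "is_ultrafilter A1 u" "\<forall>a\<in>carrier A0. i1 a \<in> u \<longleftrightarrow> i2 a \<in> v"
    using a1.ultrafilter_lift[OF a0.is_BA i1_ba_hom] M1 unfolding is_mono_def by blast
  with assms show ?thesis
    unfolding compat_pairs_def by auto
qed

definition rects :: "('b \<times> 'c) list \<Rightarrow> ('b set \<times> 'c set) set" where
  "rects l = {(u, v) \<in> compat_pairs. \<exists>(x, y)\<in>set l. x \<in> u \<and> y \<in> v}"

definition amalgam_sets :: "('b set \<times> 'c set) set set" where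
  "amalgam_sets = rects ` lists (carrier A1 \<times> carrier A2)"

definition pair_op :: "'i opl \<Rightarrow> ('b set \<times> 'c set) set \<Rightarrow> ('b set \<times> 'c set) set" where
  "pair_op p S = {(u, v) \<in> compat_pairs. (op_preimage A1 p u, op_preimage A2 p v) \<in> S}"

definition amalgam :: "(('b set \<times> 'c set) set, 'i) sba" where
  "amalgam = \<lparr>carrier = amalgam_sets, join = (\<union>), meet = (\<inter>), compl = (\<lambda>S. compat_pairs - S),
     zero = {}, one = compat_pairs, ops = pair_op\<rparr>"

lemma amalgam_simps [simp]:
  "carrier amalgam = amalgam_sets" "join amalgam = (\<union>)" "meet amalgam = (\<inter>)"
  "compl amalgam = (\<lambda>S. compat_pairs - S)" "zero amalgam = {}" "one amalgam = compat_pairs" "ops amalgam = pair_op"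
  unfolding amalgam_def by simp_all

lemma amalgam_sets_subset: "S \<in> amalgam_sets \<Longrightarrow> S \<subseteq> compat_pairs"
  unfolding amalgam_sets_def rects_def by auto

lemma rects_in_amalgam_sets: "set l \<subseteq> carrier A1 \<times> carrier A2 \<Longrightarrow> rects l \<in> amalgam_sets"
  unfolding amalgam_sets_def by (simp add: in_lists_conv_set subset_eq)

lemma amalgam_setsE:
  assumes "S \<in> amalgam_sets"
  obtains l where "set l \<subseteq> carrier A1 \<times> carrier A2" "S = rects l"
  using assms unfolding amalgam_sets_def by (auto simp: in_lists_conv_set)

lemma empty_in_amalgam_sets: "{} \<in> amalgam_sets"
  using rects_in_amalgam_sets[of "[]"] unfolding rects_def by simp

lemma compat_pairs_in_amalgam_sets: "compat_pairs \<in> amalgam_sets"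
proof -
  have "rects [(one A1, one A2)] = compat_pairs"
    unfolding rects_def compat_pairs_def by (auto intro: ultrafilterD(3))
  then show ?thesis
    using rects_in_amalgam_sets[of "[(one A1, one A2)]"] by simp
qed

lemma union_in_amalgam_sets:
  assumes "S \<in> amalgam_sets" "T \<in> amalgam_sets"
  shows "S \<union> T \<in> amalgam_sets"
proof -
  obtain l where l: "set l \<subseteq> carrier A1 \<times> carrier A2" "S = rects l"
    using assms(1) by (rule amalgam_setsE)
  obtain l' where l': "set l' \<subseteq> carrier A1 \<times> carrier A2" "T = rects l'"
    using assms(2) by (rule amalgam_setsE)
  have "S \<union> T = rects (l @ l')"
    unfolding l(2) l'(2) rects_def by auto
  with l(1) l'(1) show ?thesis
    using rects_in_amalgam_sets[of "l @ l'"] by simp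
qed

lemma rects_inter:
  assumes l: "set l \<subseteq> carrier A1 \<times> carrier A2" and l': "set l' \<subseteq> carrier A1 \<times> carrier A2"
  shows "rects l \<inter> rects l' = rects [(meet A1 x x', meet A2 y y'). (x, y) \<leftarrow> l, (x', y') \<leftarrow> l']"
    (is "_ = rects ?m")
proof (intro set_eqI iffI)
  have set_m: "set ?m = {(meet A1 x x', meet A2 y y') | x y x' y'. (x, y) \<in> set l \<and> (x', y') \<in> set l'}"
    by force
  have meet_iff: "meet A1 x x' \<in> u \<and> meet A2 y y' \<in> v \<longleftrightarrow> x \<in> u \<and> x' \<in> u \<and> y \<in> v \<and> y' \<in> v"
    if "(u, v) \<in> compat_pairs" "(x, y) \<in> set l" "(x', y') \<in> set l'" for u v x y x' y'
    using that l l' ultrafilterD(5)[OF compat_pairsD(1)[OF that(1)], of x x']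
      ultrafilterD(5)[OF compat_pairsD(2)[OF that(1)], of y y'] by blast
  fix q
  show "q \<in> rects ?m" if "q \<in> rects l \<inter> rects l'"
    using that meet_iff unfolding rects_def set_m by fast
  show "q \<in> rects l \<inter> rects l'" if "q \<in> rects ?m"
    using that meet_iff unfolding rects_def set_m by fast
qed

lemma inter_in_amalgam_sets:
  assumes "S \<in> amalgam_sets" "T \<in> amalgam_sets"
  shows "S \<inter> T \<in> amalgam_sets"
proof -
  obtain l where l: "set l \<subseteq> carrier A1 \<times> carrier A2" "S = rects l"
    using assms(1) by (rule amalgam_setsE)
  obtain l' where l': "set l' \<subseteq> carrier A1 \<times> carrier A2" "T = rects l'"
    using assms(2) by (rule amalgam_setsE)
  have "set [(meet A1 x x', meet A2 y y'). (x, y) \<leftarrow> l, (x', y') \<leftarrow> l'] \<subseteq> carrier A1 \<times> carrier A2"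
    by (auto dest!: subsetD[OF l(1)] subsetD[OF l'(1)])
  then show ?thesis
    unfolding l(2) l'(2) rects_inter[OF l(1) l'(1)] by (rule rects_in_amalgam_sets)
qed

lemma compl_rect:
  assumes "x \<in> carrier A1" "y \<in> carrier A2"
  shows "compat_pairs - rects [(x, y)] = rects [(compl A1 x, one A2), (one A1, compl A2 y)]"
  unfolding rects_def
  using assms ultrafilterD(3,6)[OF compat_pairsD(1)] ultrafilterD(3,6)[OF compat_pairsD(2)] by auto

lemma compl_rects_in_amalgam_sets: "set l \<subseteq> carrier A1 \<times> carrier A2 \<Longrightarrow> compat_pairs - rects l \<in> amalgam_sets"
proof (induction l)
  case Nil
  then show ?case
    using compat_pairs_in_amalgam_sets by (simp add: rects_def)
next
  case (Cons q l)
  obtain x y where q: "q = (x, y)" and xy: "x \<in> carrier A1" "y \<in> carrier A2"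
    using Cons.prems by (cases q) auto
  have "compat_pairs - rects (q # l) = (compat_pairs - rects [(x, y)]) \<inter> (compat_pairs - rects l)"
    unfolding q rects_def by auto
  moreover have "compat_pairs - rects [(x, y)] \<in> amalgam_sets"
    unfolding compl_rect[OF xy] using xy by (intro rects_in_amalgam_sets) auto
  ultimately show ?case
    using Cons inter_in_amalgam_sets by simp
qed

lemma compl_in_amalgam_sets: "S \<in> amalgam_sets \<Longrightarrow> compat_pairs - S \<in> amalgam_sets"
  by (elim amalgam_setsE) (simp add: compl_rects_in_amalgam_sets)

lemma pair_op_rects:
  assumes p: "p \<in> Ops" and l: "set l \<subseteq> carrier A1 \<times> carrier A2"
  shows "pair_op p (rects l) = rects (map (\<lambda>(x, y). (ops A1 p x, ops A2 p y)) l)"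
  using op_preimage_compat_pairs[OF p] l unfolding pair_op_def rects_def op_preimage_def
  by (auto simp: subset_eq) force+

lemma pair_op_in_amalgam_sets:
  assumes p: "p \<in> Ops" and "S \<in> amalgam_sets"
  shows "pair_op p S \<in> amalgam_sets"
proof -
  obtain l where l: "set l \<subseteq> carrier A1 \<times> carrier A2" "S = rects l"
    using assms(2) by (rule amalgam_setsE)
  then have "set (map (\<lambda>(x, y). (ops A1 p x, ops A2 p y)) l) \<subseteq> carrier A1 \<times> carrier A2"
    using in_variety_ops_closed[OF V1 p] in_variety_ops_closed[OF V2 p] by auto
  then show ?thesis
    unfolding l(2) pair_op_rects[OF p l(1)] by (rule rects_in_amalgam_sets)
qed

lemma amalgam_is_BA: "is_BA amalgam"
  unfolding is_BA_def amalgam_simps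
  by (intro conjI ballI)
    (auto simp: empty_in_amalgam_sets compat_pairs_in_amalgam_sets union_in_amalgam_sets
      inter_in_amalgam_sets compl_in_amalgam_sets dest: amalgam_sets_subset)

lemma amalgam_endo: "p \<in> Ops \<Longrightarrow> is_BA_endo amalgam (ops amalgam p)"
  unfolding is_BA_endo_def amalgam_simps
  using pair_op_in_amalgam_sets op_preimage_compat_pairs unfolding pair_op_def by auto

lemma eval_word_amalgam:
  assumes "set t \<subseteq> Ops" "S \<subseteq> compat_pairs"
  shows "eval_word amalgam t S = {(u, v) \<in> compat_pairs. (word_preimage A1 t u, word_preimage A2 t v) \<in> S}"
  using assms(1)
proof (induction t)
  case Nil
  have "word_preimage A1 [] u = u \<and> word_preimage A2 [] v = v" if "(u, v) \<in> compat_pairs" for u v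
    using word_preimage_Nil[OF ultrafilterD(1)[OF compat_pairsD(1)[OF that]]]
      word_preimage_Nil[OF ultrafilterD(1)[OF compat_pairsD(2)[OF that]]] by blast
  with assms(2) show ?case
    by auto
next
  case (Cons p t)
  then have "eval_word amalgam (p # t) S =
      {(u, v) \<in> compat_pairs. (word_preimage A1 t (op_preimage A1 p u), word_preimage A2 t (op_preimage A2 p v)) \<in> S}"
    using op_preimage_compat_pairs by (auto simp: pair_op_def)
  also have "\<dots> = {(u, v) \<in> compat_pairs. (word_preimage A1 (p # t) u, word_preimage A2 (p # t) v) \<in> S}"
    using word_preimage_Cons[OF V1 Cons.prems] word_preimage_Cons[OF V2 Cons.prems] by simp
  finally show ?case .
qed

lemma amalgam_in_variety: "in_variety \<alpha> Ops amalgam"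
  unfolding in_variety_def
proof (intro conjI ballI allI impI)
  fix t1 t2 :: "'i opl list" and S
  assume t: "set t1 \<subseteq> Ops" "set t2 \<subseteq> Ops" and "\<forall>k<\<alpha>. word_map t1 k = word_map t2 k"
    and "S \<in> carrier amalgam"
  then show "eval_word amalgam t1 S = eval_word amalgam t2 S"
    using word_preimage_eq[OF V1 t] word_preimage_eq[OF V2 t]
    by (simp add: eval_word_amalgam amalgam_sets_subset)
qed (use amalgam_is_BA amalgam_endo in auto)

definition emb1 :: "'b \<Rightarrow> ('b set \<times> 'c set) set" where
  "emb1 x = {(u, v) \<in> compat_pairs. x \<in> u}"

definition emb2 :: "'c \<Rightarrow> ('b set \<times> 'c set) set" where
  "emb2 y = {(u, v) \<in> compat_pairs. y \<in> v}"

lemma emb1_in_amalgam_sets: "x \<in> carrier A1 \<Longrightarrow> emb1 x \<in> amalgam_sets"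
proof -
  assume "x \<in> carrier A1"
  moreover have "emb1 x = rects [(x, one A2)]"
    unfolding emb1_def rects_def using ultrafilterD(3)[OF compat_pairsD(2)] by auto
  ultimately show ?thesis
    by (simp add: rects_in_amalgam_sets)
qed

lemma emb2_in_amalgam_sets: "y \<in> carrier A2 \<Longrightarrow> emb2 y \<in> amalgam_sets"
proof -
  assume "y \<in> carrier A2"
  moreover have "emb2 y = rects [(one A1, y)]"
    unfolding emb2_def rects_def using ultrafilterD(3)[OF compat_pairsD(1)] by auto
  ultimately show ?thesis
    by (simp add: rects_in_amalgam_sets)
qed

lemma emb1_hom: "is_hom Ops A1 amalgam emb1"
  unfolding is_hom_def amalgam_simps
  using emb1_in_amalgam_sets op_preimage_compat_pairs
    ultrafilterD(2-6)[OF compat_pairsD(1)] ultrafilterD(1)[OF compat_pairsD(1)]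
  unfolding emb1_def pair_op_def op_preimage_def by auto

lemma emb2_hom: "is_hom Ops A2 amalgam emb2"
  unfolding is_hom_def amalgam_simps
  using emb2_in_amalgam_sets op_preimage_compat_pairs
    ultrafilterD(2-6)[OF compat_pairsD(2)] ultrafilterD(1)[OF compat_pairsD(2)]
  unfolding emb2_def pair_op_def op_preimage_def by auto

lemma inj_on_emb1: "inj_on emb1 (carrier A1)"
proof (rule inj_onI, rule ccontr)
  fix x x' assume "x \<in> carrier A1" "x' \<in> carrier A1" "emb1 x = emb1 x'" "x \<noteq> x'"
  moreover obtain u where u: "is_ultrafilter A1 u" "x \<in> u \<longleftrightarrow> x' \<notin> u"
    using a1.ultrafilter_separating calculation by blast
  moreover obtain v where "(u, v) \<in> compat_pairs"
    using compat_pair_exists_fst[OF u(1)] by blast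
  ultimately show False
    unfolding emb1_def by blast
qed

lemma inj_on_emb2: "inj_on emb2 (carrier A2)"
proof (rule inj_onI, rule ccontr)
  fix y y' assume "y \<in> carrier A2" "y' \<in> carrier A2" "emb2 y = emb2 y'" "y \<noteq> y'"
  moreover obtain v where v: "is_ultrafilter A2 v" "y \<in> v \<longleftrightarrow> y' \<notin> v"
    using a2.ultrafilter_separating calculation by blast
  moreover obtain u where "(u, v) \<in> compat_pairs"
    using compat_pair_exists_snd[OF v(1)] by blast
  ultimately show False
    unfolding emb2_def by blast
qed

lemma emb1_i1_eq_emb2_i2: "a \<in> carrier A0 \<Longrightarrow> emb1 (i1 a) = emb2 (i2 a)"
  unfolding emb1_def emb2_def compat_pairs_def by auto

lemma emb1_le_emb2_interpolant:
  assumes x: "x \<in> carrier A1" and y: "y \<in> carrier A2" and le: "ba_le amalgam (emb1 x) (emb2 y)"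
  shows "\<exists>z\<in>carrier A0. ba_le A1 x (i1 z) \<and> ba_le A2 (i2 z) y"
proof (rule ultrafilter_interpolation[OF a0.is_BA a1.is_BA a2.is_BA i1_ba_hom i2_ba_hom x y])
  fix u v assume "is_ultrafilter A1 u" "is_ultrafilter A2 v" "\<forall>a\<in>carrier A0. i1 a \<in> u \<longleftrightarrow> i2 a \<in> v" "x \<in> u"
  then have "(u, v) \<in> emb1 x"
    unfolding emb1_def compat_pairs_def by auto
  with le show "y \<in> v"
    unfolding ba_le_def emb2_def by auto
qed

lemma emb2_le_emb1_interpolant:
  assumes y: "y \<in> carrier A2" and x: "x \<in> carrier A1" and le: "ba_le amalgam (emb2 y) (emb1 x)"
  shows "\<exists>z\<in>carrier A0. ba_le A2 y (i2 z) \<and> ba_le A1 (i1 z) x"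
proof (rule ultrafilter_interpolation[OF a0.is_BA a2.is_BA a1.is_BA i2_ba_hom i1_ba_hom y x])
  fix v u assume "is_ultrafilter A2 v" "is_ultrafilter A1 u" "\<forall>a\<in>carrier A0. i2 a \<in> v \<longleftrightarrow> i1 a \<in> u" "y \<in> v"
  then have "(u, v) \<in> emb2 y"
    unfolding emb2_def compat_pairs_def by auto
  with le show "x \<in> u"
    unfolding ba_le_def emb1_def by auto
qed

end

definition transport :: "('e, 'i) sba \<Rightarrow> ('e \<Rightarrow> 'd) \<Rightarrow> ('d, 'i) sba" where
  "transport E f = (let g = inv_into (carrier E) f in
     \<lparr>carrier = f ` carrier E, join = (\<lambda>a b. f (join E (g a) (g b))),
      meet = (\<lambda>a b. f (meet E (g a) (g b))), compl = (\<lambda>a. f (compl E (g a))),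
      zero = f (zero E), one = f (one E), ops = (\<lambda>p a. f (ops E p (g a)))\<rparr>)"

context
  fixes E :: "('e, 'i::wellorder) sba" and f :: "'e \<Rightarrow> 'd"
  assumes inj: "inj_on f (carrier E)"
begin

lemma transport_simps:
  "carrier (transport E f) = f ` carrier E"
  "zero (transport E f) = f (zero E)" "one (transport E f) = f (one E)"
  "x \<in> carrier E \<Longrightarrow> y \<in> carrier E \<Longrightarrow> join (transport E f) (f x) (f y) = f (join E x y)"
  "x \<in> carrier E \<Longrightarrow> y \<in> carrier E \<Longrightarrow> meet (transport E f) (f x) (f y) = f (meet E x y)"
  "x \<in> carrier E \<Longrightarrow> compl (transport E f) (f x) = f (compl E x)"
  "x \<in> carrier E \<Longrightarrow> ops (transport E f) p (f x) = f (ops E p x)"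
  unfolding transport_def Let_def using inv_into_f_f[OF inj] by simp_all

lemma transport_is_BA:
  assumes "is_BA E"
  shows "is_BA (transport E f)"
proof -
  interpret ba E
    by (rule ba.intro) (rule assms)
  show ?thesis
    unfolding is_BA_def transport_simps(1) Ball_image_comp comp_def
    by (intro conjI ballI; (simp add: transport_simps)?; (rule arg_cong[where f=f])?;
        (simp add: join_meet_absorb meet_join_absorb)?;
        (rule join_comm meet_comm join_assoc meet_assoc meet_join_distrib join_meet_distrib; simp)?)
qed

lemma ba_le_transport_iff:
  assumes "is_BA E" "x \<in> carrier E" "y \<in> carrier E"
  shows "ba_le (transport E f) (f x) (f y) \<longleftrightarrow> ba_le E x y"
  using inj_onD[OF inj, of "meet E x y" x] ba.meet_closed[OF ba.intro, OF assms] assms(2)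
  unfolding ba_le_def transport_simps(5)[OF assms(2,3)] by auto

lemma transport_endo:
  assumes "is_BA E" "is_BA_endo E (ops E p)"
  shows "is_BA_endo (transport E f) (ops (transport E f) p)"
proof -
  interpret ba E
    by (rule ba.intro) (rule assms(1))
  show ?thesis
    using assms(2) unfolding is_BA_endo_def transport_simps(1) Ball_image_comp comp_def
    by (simp add: transport_simps)
qed

lemma eval_word_transport:
  assumes V: "in_variety \<alpha> Ops E" and "set t \<subseteq> Ops" and x: "x \<in> carrier E"
  shows "eval_word (transport E f) t (f x) = f (eval_word E t x)"
  using assms(2)
proof (induction t)
  case (Cons p t)
  then show ?case
    using eval_word_closed[OF V _ x] transport_simps(7) by simp
qed simp

lemma transport_in_variety:
  assumes V: "in_variety \<alpha> Ops E"
  shows "in_variety \<alpha> Ops (transport E f)"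
  unfolding in_variety_def
proof (intro conjI ballI allI impI)
  show "is_BA (transport E f)"
    using transport_is_BA[OF in_variety_is_BA[OF V]] .
  show "is_BA_endo (transport E f) (ops (transport E f) p)" if "p \<in> Ops" for p
    using transport_endo[OF in_variety_is_BA[OF V] in_variety_endo[OF V that]] .
  fix t1 t2 :: "'i opl list" and x
  assume t: "set t1 \<subseteq> Ops" "set t2 \<subseteq> Ops" and "\<forall>k<\<alpha>. word_map t1 k = word_map t2 k"
    and "x \<in> carrier (transport E f)"
  then show "eval_word (transport E f) t1 x = eval_word (transport E f) t2 x"
    using in_variety_word_eq[OF V t] eval_word_transport[OF V] unfolding transport_simps(1) by auto
qed

lemma is_mono_transport: "is_mono Ops E (transport E f) f"
  unfolding is_mono_def is_hom_def transport_simps(1) using inj by (auto simp: transport_simps)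

end

lemma is_mono_comp:
  assumes "is_mono Ops A B h" "is_mono Ops B C k"
  shows "is_mono Ops A C (k \<circ> h)"
  using assms unfolding is_mono_def is_hom_def by (auto intro: comp_inj_on inj_on_subset)

definition pair_list_code :: "('b \<times> 'c) list \<Rightarrow> ('b + 'c + 'i) list" where
  "pair_list_code l = concat (map (\<lambda>(x, y). [Inl x, Inr (Inl y)]) l)"

lemma inj_pair_list_code: "inj (pair_list_code :: ('b \<times> 'c) list \<Rightarrow> ('b + 'c + 'i) list)"
proof (rule injI)
  fix l l' :: "('b \<times> 'c) list"
  assume "(pair_list_code l :: ('b + 'c + 'i) list) = pair_list_code l'"
  then show "l = l'"
  proof (induction l arbitrary: l')
    case Nil
    then show ?case
      by (cases l') (auto simp: pair_list_code_def)
  next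
    case (Cons q l)
    then show ?case
      by (cases l') (auto simp: pair_list_code_def split: prod.splits)
  qed
qed

context mono_span
begin

text \<open>The amalgam must live in the type \<open>('b + 'c + 'i) list\<close>; this is possible because each of
  its elements is a finite union of rectangles and hence determined by a list of pairs.\<close>

definition encode :: "('b set \<times> 'c set) set \<Rightarrow> ('b + 'c + 'i) list" where
  "encode S = pair_list_code (inv_into (lists (carrier A1 \<times> carrier A2)) rects S)"

lemma inj_on_encode: "inj_on encode amalgam_sets"
proof (rule inj_on_inverseI)
  fix S assume "S \<in> amalgam_sets"
  then show "rects (inv_into UNIV pair_list_code (encode S)) = S"
    unfolding encode_def inv_f_f[OF inj_pair_list_code] amalgam_sets_def by (rule f_inv_into_f)
qed

end

theorem superamalgamation_for_all_signatures:
  fixes \<alpha> :: "'i::wellorder" and Ops :: "'i opl set"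
  shows "superamalgamation \<alpha> Ops TYPE('a) TYPE('b) TYPE('c)"
  unfolding superamalgamation_def
  apply (intro allI impI)
  subgoal premises span for A0 A1 A2 i1 i2
  proof -
    interpret mono_span \<alpha> Ops A0 A1 A2 i1 i2
      using span by unfold_locales
    have inj: "inj_on encode (carrier amalgam)"
      using inj_on_encode by simp
    let ?D = "transport amalgam encode"
    have le_iff: "ba_le ?D (encode S) (encode T) \<longleftrightarrow> ba_le amalgam S T"
      if "S \<in> amalgam_sets" "T \<in> amalgam_sets" for S T
      using ba_le_transport_iff[OF inj amalgam_is_BA] that by simp
    show ?thesis
    proof (intro exI[of _ ?D] exI[of _ "encode \<circ> emb1"] exI[of _ "encode \<circ> emb2"] conjI ballI impI)
      show "in_variety \<alpha> Ops ?D"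
        using transport_in_variety[OF inj amalgam_in_variety] .
      show "is_mono Ops A1 ?D (encode \<circ> emb1)" "is_mono Ops A2 ?D (encode \<circ> emb2)"
        using is_mono_comp[OF _ is_mono_transport[OF inj]] emb1_hom emb2_hom inj_on_emb1 inj_on_emb2
        unfolding is_mono_def by blast+
    qed (use emb1_i1_eq_emb2_i2 emb1_le_emb2_interpolant emb2_le_emb1_interpolant le_iff
          emb1_in_amalgam_sets emb2_in_amalgam_sets in auto)
  qed
  done

theorem corollary6p8:
  fixes \<alpha> :: "'i::wellorder"
  assumes "\<exists>a b. a < b \<and> b < \<alpha>"
  shows "superamalgamation \<alpha> (ops_TA \<alpha>) TYPE('a) TYPE('b) TYPE('c)
       \<and> superamalgamation \<alpha> (ops_SA \<alpha>) TYPE('a) TYPE('b) TYPE('c)"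
  using superamalgamation_for_all_signatures by blast

end
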